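(* Let $a=a_0+a_1e_1+a_2e_2+a_3e_3\in C\ell_2$ with $a\neq 0$ and $H_a=0$, let $A=\varphi(a)$ and $$M=\varphi\Big(\frac{a'}{4(a_0^2+a_3^2)}\Big)=\frac{1}{4(a_0^2+a_3^2)}\begin{pmatrix} a_0+a_1 & a_2-a_3\\ a_2+a_3 & a_0-a_1\end{pmatrix}.$$ Then $AMA=A$, $MAM=M$, $(AM)^T=AM$ and $(MA)^T=MA$; that is, $M$ is the Moore–Penrose inverse of $\varphi(a)$.
   Context: $C\ell_2$ is the 4-dimensional real associative algebra with basis $1,e_1,e_2,e_3$ and multiplication $e_1^2=e_2^2=1$, $e_3^2=-1$, $e_1e_2=e_3=-e_2e_1$, $e_1e_3=e_2=-e_3e_1$, $e_3e_2=e_1=-e_2e_3$. For $a=a_0+a_1e_1+a_2e_2+a_3e_3$ ($a_i\in\mathbb{R}$): $a'=a_0+a_1e_1+a_2e_2-a_3e_3$, $H_a=a_0^2-a_1^2-a_2^2+a_3^2$, and $\varphi(a)=\begin{pmatrix} a_0+a_1 & a_2+a_3\\ a_2-a_3 & a_0-a_1\end{pmatrix}\in\mathbb{R}^{2\times 2}$. *)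

theory Defs
  imports "HOL-Analysis.Analysis"
begin

datatype cl2 = Cl2 (c0: real) (c1: real) (c2: real) (c3: real)

definition cl2_zero :: cl2 where "cl2_zero = Cl2 0 0 0 0"

definition cl2_scale :: "real \<Rightarrow> cl2 \<Rightarrow> cl2" where
  "cl2_scale r a = Cl2 (r * c0 a) (r * c1 a) (r * c2 a) (r * c3 a)"

definition cl2_prime :: "cl2 \<Rightarrow> cl2" where
  "cl2_prime a = Cl2 (c0 a) (c1 a) (c2 a) (- c3 a)"

definition H :: "cl2 \<Rightarrow> real" where
  "H a = (c0 a)^2 - (c1 a)^2 - (c2 a)^2 + (c3 a)^2"

definition phi :: "cl2 \<Rightarrow> real^2^2" where
  "phi a = (\<chi> i j. if i = 1 then (if j = 1 then c0 a + c1 a else c2 a + c3 a)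
                           else (if j = 1 then c2 a - c3 a else c0 a - c1 a))"

end

theory Submission
  imports Defs
begin

text \<open>
  The matrix \<open>\<phi>(a')\<close> is the transpose of \<open>A = \<phi>(a)\<close>, and \<open>det A = H\<^sub>a\<close>, so \<open>A\<close> is a singular
  \<open>2 \<times> 2\<close> matrix.  For such a matrix \<open>A A\<^sup>T A = \<parallel>A\<parallel>\<^sup>2 A\<close> with the Frobenius norm, and
  \<open>\<parallel>\<phi>(a)\<parallel>\<^sup>2 = 2(a\<^sub>0\<^sup>2 + a\<^sub>1\<^sup>2 + a\<^sub>2\<^sup>2 + a\<^sub>3\<^sup>2) = 4(a\<^sub>0\<^sup>2 + a\<^sub>3\<^sup>2)\<close> when \<open>H\<^sub>a = 0\<close>.  Hence
  \<open>M = A\<^sup>T / \<parallel>A\<parallel>\<^sup>2\<close>, and any matrix with \<open>A A\<^sup>T A = c A\<close>, \<open>c \<noteq> 0\<close>, has Moore-Penrose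
  inverse \<open>A\<^sup>T / c\<close>.
\<close>

definition moore_penrose_inverse :: "real^'n^'m \<Rightarrow> real^'m^'n \<Rightarrow> bool" where
  "moore_penrose_inverse A M \<longleftrightarrow>
     A ** M ** A = A \<and> M ** A ** M = M \<and>
     transpose (A ** M) = A ** M \<and> transpose (M ** A) = M ** A"

lemma moore_penrose_inverse_scaled_transpose:
  fixes A :: "real^'n^'m"
  assumes AAtA: "A ** transpose A ** A = c *\<^sub>R A" and "c \<noteq> 0"
  shows "moore_penrose_inverse A ((1 / c) *\<^sub>R transpose A)"
proof -
  have AtAAt: "transpose A ** A ** transpose A = c *\<^sub>R transpose A"
    using arg_cong[OF AAtA, of transpose]
    by (simp add: matrix_transpose_mul transpose_scalar matrix_mul_assoc)
  show ?thesis
    unfolding moore_penrose_inverse_def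
    using assms AtAAt
    by (simp add: matrix_scalar_ac scalar_matrix_assoc[symmetric] matrix_transpose_mul
        transpose_scalar matrix_mul_assoc)
qed

lemma power2_norm_matrix_2:
  fixes A :: "real^2^2"
  shows "(norm A)\<^sup>2 = (A$1$1)\<^sup>2 + (A$1$2)\<^sup>2 + (A$2$1)\<^sup>2 + (A$2$2)\<^sup>2"
  by (simp add: norm_vec_def L2_set_def UNIV_2 sum_nonneg)

lemma singular_matrix_2_mult_transpose_mult:
  fixes A :: "real^2^2"
  assumes "det A = 0"
  shows "A ** transpose A ** A = (norm A)\<^sup>2 *\<^sub>R A"
proof -
  have "A$1$1 * A$2$2 = A$1$2 * A$2$1"
    using assms by (simp add: det_2)
  then show ?thesis
    unfolding power2_norm_matrix_2
    by (simp add: vec_eq_iff matrix_matrix_mult_def transpose_def forall_2 UNIV_2) algebra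
qed

lemma phi_cl2_prime: "phi (cl2_prime a) = transpose (phi a)"
  by (simp add: phi_def cl2_prime_def transpose_def vec_eq_iff forall_2)

lemma phi_cl2_scale: "phi (cl2_scale r a) = r *\<^sub>R phi a"
  by (simp add: phi_def cl2_scale_def vec_eq_iff forall_2 algebra_simps)

lemma det_phi: "det (phi a) = H a"
  by (simp add: det_2 phi_def H_def power2_eq_square algebra_simps)

lemma power2_norm_phi: "(norm (phi a))\<^sup>2 = 2 * ((c0 a)\<^sup>2 + (c1 a)\<^sup>2 + (c2 a)\<^sup>2 + (c3 a)\<^sup>2)"
  unfolding power2_norm_matrix_2 by (simp add: phi_def power2_eq_square algebra_simps)

lemma phi_eq_0_iff: "phi a = 0 \<longleftrightarrow> a = cl2_zero"
  by (cases a) (auto simp: phi_def cl2_zero_def vec_eq_iff forall_2)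

theorem theorem3p4:
  fixes a :: cl2
  assumes "a \<noteq> cl2_zero" and "H a = 0"
  defines "A \<equiv> phi a"
      and "M \<equiv> phi (cl2_scale (1 / (4 * ((c0 a)^2 + (c3 a)^2))) (cl2_prime a))"
  shows "A ** M ** A = A \<and> M ** A ** M = M \<and>
         transpose (A ** M) = A ** M \<and> transpose (M ** A) = M ** A"
proof -
  have "A ** transpose A ** A = (norm A)\<^sup>2 *\<^sub>R A"
    using assms(2) by (simp add: A_def det_phi singular_matrix_2_mult_transpose_mult)
  moreover have "(norm A)\<^sup>2 \<noteq> 0"
    using assms(1) by (simp add: A_def phi_eq_0_iff)
  ultimately have "moore_penrose_inverse A ((1 / (norm A)\<^sup>2) *\<^sub>R transpose A)"
    by (rule moore_penrose_inverse_scaled_transpose)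
  moreover have "(norm A)\<^sup>2 = 4 * ((c0 a)\<^sup>2 + (c3 a)\<^sup>2)"
    using assms(2) by (simp add: A_def power2_norm_phi H_def)
  ultimately show ?thesis
    by (simp add: moore_penrose_inverse_def M_def phi_cl2_scale phi_cl2_prime A_def)
qed

end
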